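(* Let $\bar D=(D,(M_0,\alpha_0),M_f)$ be a DPNIF with $D=(P,T,F,l,V,r,w)$ a safe and well-formed DPN over a finite set $\mathcal{E}$ of event signatures, and let $\mathcal{C}\subset\mathbb{R}$ be a finite set containing every constant occurring in a guard $r(t)$ or $w(t)$, $t\in T$, and every value $\alpha_0(v)$, $v\in V$. Then the algorithm described below (Algorithm 1) terminates on $\bar D$, and its output $\langle Q,q_0,\rightarrow,F\rangle$, with $F$ the set of computed states $(M,\tilde\alpha)$ with $M=M_f$, is the GFA induced by $\bar D$ (the algorithm is sound). Algorithm 1: initialize $Q:=\{(M_0,\tilde\alpha_0)\}$ with $\tilde\alpha_0(v)=[\alpha_0(v),\alpha_0(v)]$ for all $v\in V$, worklist $W:=\{(M_0,\tilde\alpha_0)\}$, $\rightarrow:=\emptyset$. While $W\neq\emptyset$: select and remove some $(M,\tilde\alpha)$ from $W$; for every $(t,\tilde\beta)\in enabled(M,\tilde\alpha)$: let $(M',\tilde\alpha'):=fire(M,t,\tilde\beta)$; if $(M',\tilde\alpha')\notin Q$, add it to both $Q$ and $W$; let $\psi:=l(t)$, and if $w(t)\not\equiv\top$ let $\psi:=\psi\wedge guard(t,\tilde\alpha')$; add $(M,\tilde\alpha)\xrightarrow{\psi}(M',\tilde\alpha')$ to $\rightarrow$. Here: $enabled(M,\tilde\alpha)$ is the (finite) set of pairs $(t,\tilde\beta)$ with $t\in T$ and $\tilde\beta$ a region assignment defined on $\mathrm{Var}_r(t)\cup\mathrm{Var}_w(t)$ (covering all combinations of regions of $\mathcal{P}_\mathcal{C}$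 satisfying $r(t)$ and $w(t)$) such that there exist a valuation $\alpha$ with $\alpha(v)\in\tilde\alpha(v)$ for all $v\in V$ and a partial valuation $\beta$ with $\beta(v)\in\tilde\beta(v)$ for which $t$ is enabled in $(M,\alpha)$ under $\beta$; $fire(M,t,\tilde\beta)$ returns $(M',\tilde\alpha')$ with $M'(p)=M(p)-F(p,t)+F(t,p)$ for all $p\in P$, $\tilde\alpha'(v)=\tilde\beta(v)$ for $v\in\mathrm{Var}_w(t)$ and $\tilde\alpha'(v)=\tilde\alpha(v)$ otherwise; $guard(t,\tilde\alpha')=\bigwedge_{v\in\mathrm{Var}(w(t))}\phi_v$, where $\phi_v$ is $v=c$ if $\tilde\alpha'(v)=[c,c]$, $v>c_i\wedge v<c_{i+1}$ if $\tilde\alpha'(v)=(c_i,c_{i+1})$, $v<c_1$ if $\tilde\alpha'(v)=(-\infty,c_1)$, and $v>c_m$ if $\tilde\alpha'(v)=(c_m,\infty)$.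
   Context: Event signatures: a finite set $\mathcal{E}$ of pairs $\langle n,A\rangle$ (activity name $n$, finite attribute set $A$), distinct names; $\mathcal{N}_\mathcal{E}$ is the set of names, $\mathcal{A}_\mathcal{E}$ the union of attribute sets. An event of signature $\langle n,A\rangle$ is $e=\langle n,\nu\rangle$ with $\nu:A\to\mathbb{R}$ total. Conditions $\mathcal{L}_\mathcal{E}$: $\varphi::=x\mid a\odot c\mid\neg\varphi\mid\varphi\wedge\varphi$ with $x\in\mathcal{N}_\mathcal{E}$, $a\in\mathcal{A}_\mathcal{E}$, $\odot\in\{<,=,>\}$, $c\in\mathbb{R}$; $e\models x$ iff $x=n$, $e\models a\odot c$ iff $\nu(a)$ is defined and $\nu(a)\odot c$, Boolean connectives as usual. Guards $\mathcal{G}_\mathcal{E}$ are conditions not mentioning names; an (partial) assignment $\alpha$ satisfies $a\odot c$ iff $\alpha(a)\odot c$; $\mathrm{Var}(\gamma)$ is the set of attributes in guard $\gamma$. A DPN is $D=(P,T,F,l,V,r,w)$: disjoint finite sets $P$ (places) and $T$ (transitions), flow $F:(P\times T)\cup(T\times P)\to\mathbb{N}$, labeling $l:T\to\mathcal{N}_\mathcal{E}\cup\{\tau\}$ ($\tau$ = silent), variables $V\subseteq\mathcal{A}_\mathcal{E}$, read and write guard functions $r,w:T\to\mathcal{G}_\mathcal{E}$; $\mathrm{Var}_r(t)=\mathrm{Var}(r(t))$, $\mathrm{Var}_w(t)=\mathrm{Var}(w(t))$, ${}^\bullet t=\{p\mid F(p,t)>0\}$. A state is $(M,\alpha)$ with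 $M:P\to\mathbb{N}$ and $\alpha:V\to\mathbb{R}$ total. Transition $t$ is enabled in $(M,\alpha)$ under a partial valuation $\beta:V\rightharpoonup\mathbb{R}$ iff $\beta$ is defined on $\mathrm{Var}_r(t)\cup\mathrm{Var}_w(t)$, $\beta(v)=\alpha(v)$ for $v\in\mathrm{Var}_r(t)$, $\beta\models r(t)$, $\beta\models w(t)$, and $M(p)\ge F(p,t)$ for all $p\in{}^\bullet t$. Firing yields $(M',\alpha')$ with $M'(p)=M(p)-F(p,t)+F(t,p)$, $\alpha'(v)=\beta(v)$ for $v\in\mathrm{Var}_w(t)$, $\alpha'(v)=\alpha(v)$ otherwise. Safe: every reachable marking assigns at most 1 token to each place. Well-formed: every visible $t$ with $l(t)=n$, $\langle n,A\rangle\in\mathcal{E}$, has $\mathrm{Var}_w(t)=A$, and every silent $t$ has $w(t)\equiv\top$. A DPNIF is $(D,(M_0,\alpha_0),M_f)$ with an initial state and a final marking. Interval abstraction: for $\mathcal{C}=\{c_1<\dots<c_m\}$, $\mathcal{P}_\mathcal{C}$ is the partition of $\mathbb{R}$ into $(-\infty,c_1)$, $(c_m,\infty)$, $[c_i,c_i]$ ($1\le i\le m$) and $(c_i,c_{i+1})$ ($1\le i<m$). A region assignment maps variables to elements of $\mathcal{P}_\mathcal{C}$; $\tilde\alpha$ denotes the region assignment sending $v$ to the region containing $\alpha(v)$. A guarded finite-state automaton (GFA) over $\mathcal{E}$ is $\langle Q,q_0,\rightarrow,F\rangle$ with finite state set $Q$, initial state $q_0$, transition relation $\rightarrow\subseteq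 Q\times\mathcal{L}_\mathcal{E}\times Q$ (here extended so that labels may use $\tau$ in place of a name), and final states $F\subseteq Q$. GFA induced by $\bar D$: let $S$ be the set of states reachable from $(M_0,\alpha_0)$; $(M,\alpha)\sim(M',\alpha')$ iff $M=M'$ and for every $v\in V$, $\alpha(v),\alpha'(v)$ lie in the same region of $\mathcal{P}_\mathcal{C}$; classes are represented as $(M,\tilde\alpha)$. Then $Q=S/{\sim}$; $q_0=(M_0,\tilde\alpha_0)$; $(M,\tilde\alpha)\xrightarrow{a\wedge\psi}(M',\tilde\alpha')$ iff there are $t\in T$ and $\beta$ with $(M,\alpha)$ firing $t$ under $\beta$ into $(M',\alpha')$ for some $\alpha,\alpha'$ with $\alpha(v)\in\tilde\alpha(v)$, $\alpha'(v)\in\tilde\alpha'(v)$ for all $v$, $a=l(t)$, and $\psi=\bigwedge_{v\in\mathrm{Var}(w(t))}\phi_v$ with $\phi_v$ as defined in the claim; $F=\{(M,\tilde\alpha)\mid M=M_f\}$. *)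

theory Defs
  imports Complex_Main
begin

datatype cmp = Lt | Eq | Gt

fun cmp_holds :: "cmp \<Rightarrow> real \<Rightarrow> real \<Rightarrow> bool" where
  "cmp_holds Lt x c = (x < c)"
| "cmp_holds Eq x c = (x = c)"
| "cmp_holds Gt x c = (x > c)"

datatype 'a guard =
    GTrue
  | GAtom 'a cmp real
  | GNeg "'a guard"
  | GConj "'a guard" "'a guard"

text \<open>Conditions (GFA labels); a name atom may be an activity name (Some n) or tau (None).\<close>
datatype ('n, 'a) cond =
    CLab "'n option"
  | CAtom 'a cmp real
  | CNeg "('n, 'a) cond"
  | CConj "('n, 'a) cond" "('n, 'a) cond"

fun gsat :: "('a \<Rightarrow> real option) \<Rightarrow> 'a guard \<Rightarrow> bool" where
  "gsat \<beta> GTrue = True"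
| "gsat \<beta> (GAtom a op c) = (case \<beta> a of Some x \<Rightarrow> cmp_holds op x c | None \<Rightarrow> False)"
| "gsat \<beta> (GNeg g) = (\<not> gsat \<beta> g)"
| "gsat \<beta> (GConj g h) = (gsat \<beta> g \<and> gsat \<beta> h)"

fun gvars :: "'a guard \<Rightarrow> 'a set" where
  "gvars GTrue = {}"
| "gvars (GAtom a op c) = {a}"
| "gvars (GNeg g) = gvars g"
| "gvars (GConj g h) = gvars g \<union> gvars h"

fun gconsts :: "'a guard \<Rightarrow> real set" where
  "gconsts GTrue = {}"
| "gconsts (GAtom a op c) = {c}"
| "gconsts (GNeg g) = gconsts g"
| "gconsts (GConj g h) = gconsts g \<union> gconsts h"

text \<open>Semantic validity of a guard (w(t) equivalent to top).\<close>
definition gvalid :: "'a guard \<Rightarrow> bool" where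
  "gvalid g \<longleftrightarrow> (\<forall>\<sigma> :: 'a \<Rightarrow> real. gsat (Some \<circ> \<sigma>) g)"

definition event_sigs :: "('n \<times> 'a set) set \<Rightarrow> bool" where
  "event_sigs E \<longleftrightarrow> finite E \<and> (\<forall>(n, A) \<in> E. finite A)
     \<and> (\<forall>(n, A) \<in> E. \<forall>(n', A') \<in> E. n = n' \<longrightarrow> A = A')"

definition sig_names :: "('n \<times> 'a set) set \<Rightarrow> 'n set" where
  "sig_names E = fst ` E"

definition sig_attrs :: "('n \<times> 'a set) set \<Rightarrow> 'a set" where
  "sig_attrs E = \<Union> (snd ` E)"

text \<open>Flow F is given by its two halves, extended by 0 outside (P x T) u (T x P).
  Labels: None is the silent label tau.\<close>
record ('p, 't, 'n, 'a) dpn =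
  places :: "'p set"
  trans :: "'t set"
  flow_in :: "'p \<Rightarrow> 't \<Rightarrow> nat"
  flow_out :: "'t \<Rightarrow> 'p \<Rightarrow> nat"
  lab :: "'t \<Rightarrow> 'n option"
  vars :: "'a set"
  rguard :: "'t \<Rightarrow> 'a guard"
  wguard :: "'t \<Rightarrow> 'a guard"

definition is_dpn :: "('n \<times> 'a set) set \<Rightarrow> ('p, 't, 'n, 'a) dpn \<Rightarrow> bool" where
  "is_dpn E D \<longleftrightarrow>
     finite (places D) \<and> finite (trans D)
   \<and> (\<forall>p t. (p \<notin> places D \<or> t \<notin> trans D) \<longrightarrow> flow_in D p t = 0 \<and> flow_out D t p = 0)
   \<and> (\<forall>t \<in> trans D. \<forall>n. lab D t = Some n \<longrightarrow> n \<in> sig_names E)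
   \<and> vars D \<subseteq> sig_attrs E
   \<and> (\<forall>t \<in> trans D. gvars (rguard D t) \<subseteq> sig_attrs E \<and> gvars (wguard D t) \<subseteq> sig_attrs E)"

abbreviation Var_r :: "('p, 't, 'n, 'a) dpn \<Rightarrow> 't \<Rightarrow> 'a set" where
  "Var_r D t \<equiv> gvars (rguard D t)"

abbreviation Var_w :: "('p, 't, 'n, 'a) dpn \<Rightarrow> 't \<Rightarrow> 'a set" where
  "Var_w D t \<equiv> gvars (wguard D t)"

text \<open>Markings are functions 'p => nat (0 outside P); valuations alpha : V -> R are
  functions 'a => real of which only the values on V matter; partial valuations
  beta : V ~> R are maps with domain contained in V.\<close>

definition enabled :: "('p, 't, 'n, 'a) dpn \<Rightarrow> ('p \<Rightarrow> nat) \<Rightarrow> ('a \<Rightarrow> real) \<Rightarrow> 't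
     \<Rightarrow> ('a \<Rightarrow> real option) \<Rightarrow> bool" where
  "enabled D M \<alpha> t \<beta> \<longleftrightarrow>
     t \<in> trans D \<and> dom \<beta> \<subseteq> vars D
   \<and> Var_r D t \<union> Var_w D t \<subseteq> dom \<beta>
   \<and> (\<forall>v \<in> Var_r D t. \<beta> v = Some (\<alpha> v))
   \<and> gsat \<beta> (rguard D t) \<and> gsat \<beta> (wguard D t)
   \<and> (\<forall>p \<in> places D. M p \<ge> flow_in D p t)"

definition fire_marking :: "('p, 't, 'n, 'a) dpn \<Rightarrow> ('p \<Rightarrow> nat) \<Rightarrow> 't \<Rightarrow> ('p \<Rightarrow> nat)" where
  "fire_marking D M t = (\<lambda>p. M p - flow_in D p t + flow_out D t p)"

definition fires :: "('p, 't, 'n, 'a) dpn \<Rightarrow> ('p \<Rightarrow> nat) \<times> ('a \<Rightarrow> real) \<Rightarrow> 't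
     \<Rightarrow> ('a \<Rightarrow> real option) \<Rightarrow> ('p \<Rightarrow> nat) \<times> ('a \<Rightarrow> real) \<Rightarrow> bool" where
  "fires D s t \<beta> s' \<longleftrightarrow> enabled D (fst s) (snd s) t \<beta>
     \<and> s' = (fire_marking D (fst s) t,
             \<lambda>v. if v \<in> Var_w D t then the (\<beta> v) else snd s v)"

definition reachable :: "('p, 't, 'n, 'a) dpn \<Rightarrow> ('p \<Rightarrow> nat) \<times> ('a \<Rightarrow> real)
     \<Rightarrow> (('p \<Rightarrow> nat) \<times> ('a \<Rightarrow> real)) set" where
  "reachable D s0 = {s. (\<lambda>x y. \<exists>t \<beta>. fires D x t \<beta> y)\<^sup>*\<^sup>* s0 s}"

definition safe :: "('p, 't, 'n, 'a) dpn \<Rightarrow> ('p \<Rightarrow> nat) \<times> ('a \<Rightarrow> real) \<Rightarrow> bool" where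
  "safe D s0 \<longleftrightarrow> (\<forall>s \<in> reachable D s0. \<forall>p \<in> places D. fst s p \<le> 1)"

definition well_formed :: "('n \<times> 'a set) set \<Rightarrow> ('p, 't, 'n, 'a) dpn \<Rightarrow> bool" where
  "well_formed E D \<longleftrightarrow>
     (\<forall>t \<in> trans D. \<forall>n A. lab D t = Some n \<longrightarrow> (n, A) \<in> E \<longrightarrow> Var_w D t = A)
   \<and> (\<forall>t \<in> trans D. lab D t = None \<longrightarrow> gvalid (wguard D t))"

definition is_dpnif :: "('n \<times> 'a set) set \<Rightarrow> ('p, 't, 'n, 'a) dpn \<Rightarrow> ('p \<Rightarrow> nat)
     \<Rightarrow> ('a \<Rightarrow> real) \<Rightarrow> ('p \<Rightarrow> nat) \<Rightarrow> bool" where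
  "is_dpnif E D M0 \<alpha>0 Mf \<longleftrightarrow> is_dpn E D
     \<and> (\<forall>p. p \<notin> places D \<longrightarrow> M0 p = 0 \<and> Mf p = 0)"

datatype region = RLess real | RPt real | RBetween real real | RGreater real

fun reg_set :: "region \<Rightarrow> real set" where
  "reg_set (RLess c) = {..<c}"
| "reg_set (RPt c) = {c}"
| "reg_set (RBetween a b) = {a<..<b}"
| "reg_set (RGreater c) = {c<..}"

definition partition_C :: "real set \<Rightarrow> region set" where
  "partition_C C = (if C = {} then {} else
      {RLess (Min C), RGreater (Max C)} \<union> RPt ` C
      \<union> {RBetween a b | a b. a \<in> C \<and> b \<in> C \<and> a < b \<and> (\<forall>c \<in> C. \<not> (a < c \<and> c < b))})"

definition region_of :: "real set \<Rightarrow> real \<Rightarrow> region" where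
  "region_of C x = (THE R. R \<in> partition_C C \<and> x \<in> reg_set R)"

definition tilde :: "('p, 't, 'n, 'a) dpn \<Rightarrow> real set \<Rightarrow> ('a \<Rightarrow> real) \<Rightarrow> ('a \<Rightarrow> region option)" where
  "tilde D C \<alpha> = (\<lambda>v. if v \<in> vars D then Some (region_of C (\<alpha> v)) else None)"

type_synonym ('p, 'a) astate = "('p \<Rightarrow> nat) \<times> ('a \<Rightarrow> region option)"

type_synonym ('q, 'n, 'a) gfa = "'q set \<times> 'q \<times> ('q \<times> ('n, 'a) cond \<times> 'q) set \<times> 'q set"

fun phi :: "'a \<Rightarrow> region \<Rightarrow> ('n, 'a) cond" where
  "phi v (RPt c) = CAtom v Eq c"
| "phi v (RBetween a b) = CConj (CAtom v Gt a) (CAtom v Lt b)"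
| "phi v (RLess c) = CAtom v Lt c"
| "phi v (RGreater c) = CAtom v Gt c"

text \<open>Conjunction of a list of conditions; None stands for the empty conjunction (top).\<close>
fun conjs :: "('n, 'a) cond list \<Rightarrow> ('n, 'a) cond option" where
  "conjs [] = None"
| "conjs [x] = Some x"
| "conjs (x # xs) = map_option (CConj x) (conjs xs)"

definition guard_of :: "('p, 't, 'n, 'a::linorder) dpn \<Rightarrow> 't \<Rightarrow> ('a \<Rightarrow> region option)
     \<Rightarrow> ('n, 'a) cond option" where
  "guard_of D t \<alpha>' = conjs (map (\<lambda>v. phi v (the (\<alpha>' v))) (sorted_list_of_set (Var_w D t)))"

fun label_and :: "'n option \<Rightarrow> ('n, 'a) cond option \<Rightarrow> ('n, 'a) cond" where
  "label_and a None = CLab a"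
| "label_and a (Some \<psi>) = CConj (CLab a) \<psi>"

definition induced_gfa :: "('p, 't, 'n, 'a::linorder) dpn \<Rightarrow> real set \<Rightarrow> ('p \<Rightarrow> nat)
     \<Rightarrow> ('a \<Rightarrow> real) \<Rightarrow> ('p \<Rightarrow> nat) \<Rightarrow> (('p, 'a) astate, 'n, 'a) gfa" where
  "induced_gfa D C M0 \<alpha>0 Mf =
    (let Q = {(M, tilde D C \<alpha>) | M \<alpha>. (M, \<alpha>) \<in> reachable D (M0, \<alpha>0)};
         R = {(q, lbl, q') | q lbl q'. q \<in> Q \<and> q' \<in> Q \<and>
               (\<exists>t \<beta> M \<alpha> M' \<alpha>'. fires D (M, \<alpha>) t \<beta> (M', \<alpha>')
                  \<and> q = (M, tilde D C \<alpha>) \<and> q' = (M', tilde D C \<alpha>')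
                  \<and> lbl = label_and (lab D t) (guard_of D t (tilde D C \<alpha>')))}
     in (Q, (M0, tilde D C \<alpha>0), R, {q \<in> Q. fst q = Mf}))"

definition enabled_reg :: "('p, 't, 'n, 'a) dpn \<Rightarrow> real set \<Rightarrow> ('p, 'a) astate
     \<Rightarrow> ('t \<times> ('a \<Rightarrow> region option)) set" where
  "enabled_reg D C s = {(t, \<beta>t). t \<in> trans D
      \<and> dom \<beta>t = Var_r D t \<union> Var_w D t
      \<and> (\<forall>v \<in> dom \<beta>t. the (\<beta>t v) \<in> partition_C C)
      \<and> (\<exists>\<alpha> \<beta>. (\<forall>v \<in> vars D. \<alpha> v \<in> reg_set (the (snd s v)))
              \<and> (\<forall>v \<in> dom \<beta>t. \<exists>x. \<beta> v = Some x \<and> x \<in> reg_set (the (\<beta>t v)))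
              \<and> enabled D (fst s) \<alpha> t \<beta>)}"

definition fire_reg :: "('p, 't, 'n, 'a) dpn \<Rightarrow> ('p, 'a) astate \<Rightarrow> 't
     \<Rightarrow> ('a \<Rightarrow> region option) \<Rightarrow> ('p, 'a) astate" where
  "fire_reg D s t \<beta>t = (fire_marking D (fst s) t,
      \<lambda>v. if v \<in> Var_w D t then \<beta>t v else snd s v)"

definition alg_label :: "('p, 't, 'n, 'a::linorder) dpn \<Rightarrow> 't \<Rightarrow> ('a \<Rightarrow> region option)
     \<Rightarrow> ('n, 'a) cond" where
  "alg_label D t \<alpha>' = (if wguard D t = GTrue then CLab (lab D t)
                        else label_and (lab D t) (guard_of D t \<alpha>'))"

text \<open>Configurations (Q, W, ->) of the while loop.\<close>
type_synonym ('p, 'n, 'a) config =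
  "('p, 'a) astate set \<times> ('p, 'a) astate set \<times> (('p, 'a) astate \<times> ('n, 'a) cond \<times> ('p, 'a) astate) set"

definition alg_q0 :: "('p, 't, 'n, 'a) dpn \<Rightarrow> ('p \<Rightarrow> nat) \<Rightarrow> ('a \<Rightarrow> real) \<Rightarrow> ('p, 'a) astate" where
  "alg_q0 D M0 \<alpha>0 = (M0, \<lambda>v. if v \<in> vars D then Some (RPt (\<alpha>0 v)) else None)"

definition alg_init :: "('p, 't, 'n, 'a) dpn \<Rightarrow> ('p \<Rightarrow> nat) \<Rightarrow> ('a \<Rightarrow> real) \<Rightarrow> ('p, 'n, 'a) config" where
  "alg_init D M0 \<alpha>0 = ({alg_q0 D M0 \<alpha>0}, {alg_q0 D M0 \<alpha>0}, {})"

text \<open>One iteration of the while loop: some state s is selected and removed from W,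
  and the for-loop over enabled(s) is executed (its result does not depend on the order).\<close>
definition alg_step :: "('p, 't, 'n, 'a::linorder) dpn \<Rightarrow> real set
     \<Rightarrow> ('p, 'n, 'a) config \<Rightarrow> ('p, 'n, 'a) config \<Rightarrow> bool" where
  "alg_step D C c c' \<longleftrightarrow> (case c of (Q, W, R) \<Rightarrow>
     (\<exists>s \<in> W.
        let succs = {fire_reg D s t \<beta>t | t \<beta>t. (t, \<beta>t) \<in> enabled_reg D C s};
            edges = {(s, alg_label D t (snd (fire_reg D s t \<beta>t)), fire_reg D s t \<beta>t)
                      | t \<beta>t. (t, \<beta>t) \<in> enabled_reg D C s}
        in c' = (Q \<union> succs, (W - {s}) \<union> (succs - Q), R \<union> edges)))"

definition alg_output :: "('p, 't, 'n, 'a) dpn \<Rightarrow> ('p \<Rightarrow> nat) \<Rightarrow> ('a \<Rightarrow> real) \<Rightarrow> ('p \<Rightarrow> nat)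
     \<Rightarrow> ('p, 'n, 'a) config \<Rightarrow> (('p, 'a) astate, 'n, 'a) gfa" where
  "alg_output D M0 \<alpha>0 Mf c = (case c of (Q, W, R) \<Rightarrow> (Q, alg_q0 D M0 \<alpha>0, R, {q \<in> Q. fst q = Mf}))"

end

theory Submission
  imports Defs
begin

(* Two reals in the same region of P_C compare in the same way with every constant of C, so
   partial valuations that agree region-wise satisfy the same guards. Hence an abstract step
   (t, beta~) found enabled in a class (M, alpha~) is realised by a concrete firing from every
   representative alpha of the class, and every concrete firing is abstracted by such a step:
   the edges Algorithm 1 adds out of a reachable class are exactly the edges of the induced GFA
   out of that class. Safety and the finiteness of P, V and C leave finitely many classes. Each
   loop iteration moves one class from W into the processed set Q - W, so the loop terminates;
   when W is empty, Q contains the initial class and is closed under successors, hence it is the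
   set of reachable classes. *)

lemma partition_C_eq:
  "C \<noteq> {} \<Longrightarrow> partition_C C = {RLess (Min C), RGreater (Max C)} \<union> RPt ` C
      \<union> {RBetween a b | a b. a \<in> C \<and> b \<in> C \<and> a < b \<and> (\<forall>c \<in> C. \<not> (a < c \<and> c < b))}"
  by (simp add: partition_C_def)

lemma finite_partition_C:
  assumes "finite C"
  shows "finite (partition_C C)"
proof -
  let ?gaps = "{RBetween a b | a b. a \<in> C \<and> b \<in> C \<and> a < b \<and> (\<forall>c \<in> C. \<not> (a < c \<and> c < b))}"
  have "?gaps \<subseteq> case_prod RBetween ` (C \<times> C)"
    by auto
  moreover have "finite (case_prod RBetween ` (C \<times> C))"
    using assms by simp
  ultimately have "finite ?gaps"
    by (rule finite_subset)
  with assms show ?thesis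
    unfolding partition_C_def by simp
qed

lemma partition_C_covers:
  assumes "finite C" "C \<noteq> {}"
  obtains R where "R \<in> partition_C C" "x \<in> reg_set R"
proof -
  note partition = partition_C_eq[OF assms(2)]
  consider "x \<in> C" | "x < Min C" | "Max C < x" | "x \<notin> C" "Min C < x" "x < Max C"
    using Min_in[OF assms] Max_in[OF assms] by (metis linorder_neqE_linordered_idom)
  then show thesis
  proof cases
    case 1
    then show thesis using that[of "RPt x"] by (simp add: partition)
  next
    case 2
    then show thesis using that[of "RLess (Min C)"] by (simp add: partition)
  next
    case 3
    then show thesis using that[of "RGreater (Max C)"] by (simp add: partition)
  next
    case 4
    let ?A = "{c \<in> C. c < x}" and ?B = "{c \<in> C. x < c}"
    define a where "a = Max ?A"
    define b where "b = Min ?B"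
    have "Min C \<in> ?A" "Max C \<in> ?B" "finite ?A" "finite ?B"
      using 4 assms by auto
    then have "a \<in> ?A" "b \<in> ?B"
      unfolding a_def b_def by (metis Max_in empty_iff, metis Min_in empty_iff)
    then have a: "a \<in> C" "a < x" and b: "b \<in> C" "x < b"
      by auto
    have below: "c \<le> a" if "c \<in> ?A" for c
      using that assms unfolding a_def by simp
    have above: "b \<le> c" if "c \<in> ?B" for c
      using that assms unfolding b_def by simp
    have "\<not> (a < c \<and> c < b)" if "c \<in> C" for c
      using below[of c] above[of c] that \<open>x \<notin> C\<close> by (cases c x rule: linorder_cases) auto
    with a b have "RBetween a b \<in> partition_C C"
      unfolding partition by auto
    with a b show thesis using that by auto
  qed
qed

lemma partition_C_disjoint:
  assumes "finite C" "R \<in> partition_C C" "R' \<in> partition_C C" "x \<in> reg_set R" "x \<in> reg_set R'"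
  shows "R = R'"
proof -
  have "C \<noteq> {}" using assms(2) by (auto simp: partition_C_def)
  then have bounds: "\<And>c. c \<in> C \<Longrightarrow> Min C \<le> c \<and> c \<le> Max C" and "Min C \<le> Max C"
    using assms(1) by auto
  show ?thesis
    using assms(2-5) \<open>Min C \<le> Max C\<close> unfolding partition_C_eq[OF \<open>C \<noteq> {}\<close>]
    by (auto dest: bounds) (metis less_trans not_less_iff_gr_or_eq)+
qed

lemma region_of_eqI:
  assumes "finite C" "R \<in> partition_C C" "x \<in> reg_set R"
  shows "region_of C x = R"
  unfolding region_of_def using assms partition_C_disjoint by blast

lemma region_of_in_partition_C:
  assumes "finite C" "C \<noteq> {}"
  shows "region_of C x \<in> partition_C C" and "x \<in> reg_set (region_of C x)"
  using partition_C_covers[OF assms, of x] region_of_eqI[OF assms(1)] by metis+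

lemma cmp_holds_region_of_cong:
  assumes "finite C" "c \<in> C" "region_of C x = region_of C y"
  shows "cmp_holds op x c = cmp_holds op y c"
proof -
  have "C \<noteq> {}" using assms(2) by auto
  define R where "R = region_of C x"
  have R: "R \<in> partition_C C" "x \<in> reg_set R" "y \<in> reg_set R"
    using region_of_in_partition_C[OF assms(1) \<open>C \<noteq> {}\<close>] assms(3) unfolding R_def by metis+
  have "Min C \<le> c" "c \<le> Max C" using assms(1,2) by auto
  from R(1) assms(2) consider "R = RLess (Min C)" | "R = RGreater (Max C)" | d where "R = RPt d"
    | a b where "R = RBetween a b" "c \<le> a \<or> b \<le> c"
    unfolding partition_C_eq[OF \<open>C \<noteq> {}\<close>] by (auto simp: not_less)
  then have "(x < c \<longleftrightarrow> y < c) \<and> (x = c \<longleftrightarrow> y = c)"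
    using R(2,3) \<open>Min C \<le> c\<close> \<open>c \<le> Max C\<close> by cases auto
  then show ?thesis by (cases op) auto
qed

lemma gsat_region_of_cong:
  assumes "finite C" "gconsts g \<subseteq> C"
    and "\<forall>a \<in> gvars g. rel_option (\<lambda>x y. region_of C x = region_of C y) (\<beta> a) (\<beta>' a)"
  shows "gsat \<beta> g = gsat \<beta>' g"
  using assms(2,3)
proof (induction g)
  case (GAtom a op c)
  then have "c \<in> C" and "rel_option (\<lambda>x y. region_of C x = region_of C y) (\<beta> a) (\<beta>' a)"
    by auto
  then show ?case
    by (cases "\<beta> a"; cases "\<beta>' a")
      (auto dest: cmp_holds_region_of_cong[OF assms(1) \<open>c \<in> C\<close>, where op = op])
qed auto

lemma alg_label_eq_label_and: "alg_label D t \<alpha>' = label_and (lab D t) (guard_of D t \<alpha>')"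
  by (simp add: alg_label_def guard_of_def)

lemma fire_reg_tilde:
  assumes "fires D (M, \<alpha>) t \<beta> (M', \<alpha>')"
    and "\<forall>v \<in> Var_w D t. \<beta>t v = Some (region_of C (the (\<beta> v)))"
  shows "fire_reg D (M, tilde D C \<alpha>) t \<beta>t = (M', tilde D C \<alpha>')"
proof -
  have "Var_w D t \<subseteq> vars D"
    using assms(1) unfolding fires_def enabled_def by auto
  then show ?thesis
    using assms unfolding fires_def fire_reg_def tilde_def by (auto simp: fun_eq_iff)
qed

lemma reachable_init: "s0 \<in> reachable D s0"
  by (simp add: reachable_def)

lemma reachable_fires: "s \<in> reachable D s0 \<Longrightarrow> fires D s t \<beta> s' \<Longrightarrow> s' \<in> reachable D s0"
  unfolding reachable_def by (auto intro: rtranclp.rtrancl_into_rtrancl)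

lemma reachable_marking_outside_places:
  assumes "s \<in> reachable D s0" "\<forall>t. flow_in D p t = 0 \<and> flow_out D t p = 0"
  shows "fst s p = fst s0 p"
proof -
  have "(\<lambda>x y. \<exists>t \<beta>. fires D x t \<beta> y)\<^sup>*\<^sup>* s0 s"
    using assms(1) by (simp add: reachable_def)
  then show ?thesis
  proof induction
    case (step y z)
    then obtain t where "fst z = fire_marking D (fst y) t"
      unfolding fires_def by auto
    with step.IH assms(2) show ?case
      by (simp add: fire_marking_def)
  qed simp
qed

definition alg_succs :: "('p, 't, 'n, 'a) dpn \<Rightarrow> real set \<Rightarrow> ('p, 'a) astate \<Rightarrow> ('p, 'a) astate set"
  where "alg_succs D C s = {fire_reg D s t \<beta>t | t \<beta>t. (t, \<beta>t) \<in> enabled_reg D C s}"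

definition alg_edges :: "('p, 't, 'n, 'a::linorder) dpn \<Rightarrow> real set \<Rightarrow> ('p, 'a) astate
    \<Rightarrow> (('p, 'a) astate \<times> ('n, 'a) cond \<times> ('p, 'a) astate) set"
  where "alg_edges D C s = {(s, alg_label D t (snd (fire_reg D s t \<beta>t)), fire_reg D s t \<beta>t)
      | t \<beta>t. (t, \<beta>t) \<in> enabled_reg D C s}"

lemma alg_step_iff:
  "alg_step D C (Q, W, R) c' \<longleftrightarrow>
     (\<exists>s \<in> W. c' = (Q \<union> alg_succs D C s, W - {s} \<union> (alg_succs D C s - Q), R \<union> alg_edges D C s))"
  by (simp add: alg_step_def alg_succs_def alg_edges_def Let_def)

lemma alg_succs_eq_targets: "alg_succs D C s = (\<lambda>e. snd (snd e)) ` alg_edges D C s"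
  unfolding alg_succs_def alg_edges_def by force

locale interval_abstraction =
  fixes D :: "('p, 't, 'n, 'a::linorder) dpn" and C :: "real set"
  assumes finite_C: "finite C"
    and guard_consts: "\<forall>t \<in> trans D. gconsts (rguard D t) \<union> gconsts (wguard D t) \<subseteq> C"
    and C_nonempty: "vars D \<noteq> {} \<Longrightarrow> C \<noteq> {}"
      \<comment> \<open>for C = {} the partition is empty and region_of is junk\<close>
begin

lemma region_of_var:
  assumes "v \<in> vars D"
  shows "region_of C x \<in> partition_C C" and "x \<in> reg_set (region_of C x)"
proof -
  have "C \<noteq> {}"
    using C_nonempty assms by blast
  then show "region_of C x \<in> partition_C C" and "x \<in> reg_set (region_of C x)"
    by (simp_all add: region_of_in_partition_C[OF finite_C])
qed

lemma enabled_reg_fires: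
  assumes "(t, \<beta>t) \<in> enabled_reg D C (M, tilde D C \<alpha>)"
  obtains \<beta> M' \<alpha>' where "fires D (M, \<alpha>) t \<beta> (M', \<alpha>')"
    and "fire_reg D (M, tilde D C \<alpha>) t \<beta>t = (M', tilde D C \<alpha>')"
proof -
  from assms obtain \<alpha>1 \<beta>1 where t: "t \<in> trans D"
    and dom_\<beta>t: "dom \<beta>t = Var_r D t \<union> Var_w D t"
    and \<beta>t_regions: "\<forall>v \<in> dom \<beta>t. the (\<beta>t v) \<in> partition_C C"
    and \<alpha>1: "\<forall>v \<in> vars D. \<alpha>1 v \<in> reg_set (the (tilde D C \<alpha> v))"
    and \<beta>1: "\<forall>v \<in> dom \<beta>t. \<exists>x. \<beta>1 v = Some x \<and> x \<in> reg_set (the (\<beta>t v))"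
    and enabled1: "enabled D M \<alpha>1 t \<beta>1"
    unfolding enabled_reg_def by (clarsimp simp only: mem_Collect_eq case_prod_conv fst_conv snd_conv)
  have dom_\<beta>1: "dom \<beta>1 \<subseteq> vars D" "Var_r D t \<union> Var_w D t \<subseteq> dom \<beta>1"
    and read_\<beta>1: "\<forall>v \<in> Var_r D t. \<beta>1 v = Some (\<alpha>1 v)"
    using enabled1 unfolding enabled_def by auto
  have same_region: "region_of C (\<alpha>1 v) = region_of C (\<alpha> v)" if "v \<in> vars D" for v
  proof (rule region_of_eqI[OF finite_C region_of_var(1)[OF that]])
    show "\<alpha>1 v \<in> reg_set (region_of C (\<alpha> v))"
      using \<alpha>1 that by (simp add: tilde_def)
  qed
  \<comment> \<open>Reading the values of alpha instead of alpha1 changes no region, hence no guard.\<close>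
  define \<beta> where "\<beta> = (\<lambda>v. if v \<in> Var_r D t then Some (\<alpha> v) else \<beta>1 v)"
  have \<beta>_\<beta>1: "rel_option (\<lambda>x y. region_of C x = region_of C y) (\<beta> v) (\<beta>1 v)" for v
  proof (cases "v \<in> Var_r D t")
    case True
    then have "v \<in> vars D"
      using dom_\<beta>1 by auto
    with True show ?thesis
      using same_region read_\<beta>1 by (simp add: \<beta>_def)
  next
    case False
    then show ?thesis
      by (cases "\<beta>1 v") (simp_all add: \<beta>_def)
  qed
  have same_guard: "gsat \<beta> g = gsat \<beta>1 g" if "gconsts g \<subseteq> C" for g
    using gsat_region_of_cong[OF finite_C that] \<beta>_\<beta>1 by blast
  have "gsat \<beta> (rguard D t)" "gsat \<beta> (wguard D t)"
    using same_guard[of "rguard D t"] same_guard[of "wguard D t"] guard_consts t enabled1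
    unfolding enabled_def by auto
  then have "enabled D M \<alpha> t \<beta>"
    using enabled1 dom_\<beta>1 unfolding enabled_def \<beta>_def by (auto split: if_splits)
  then have fires:
      "fires D (M, \<alpha>) t \<beta> (fire_marking D M t, \<lambda>v. if v \<in> Var_w D t then the (\<beta> v) else \<alpha> v)"
    unfolding fires_def fst_conv snd_conv by simp
  have "\<forall>v \<in> Var_w D t. \<beta>t v = Some (region_of C (the (\<beta> v)))"
  proof
    fix v assume "v \<in> Var_w D t"
    then obtain R where R: "\<beta>t v = Some R"
      using dom_\<beta>t by auto
    with \<open>v \<in> Var_w D t\<close> dom_\<beta>t \<beta>1 \<beta>t_regions obtain x
      where x: "\<beta>1 v = Some x" "x \<in> reg_set R" and "R \<in> partition_C C"
      by force
    then have "region_of C x = R"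
      using region_of_eqI[OF finite_C] by blast
    with \<beta>_\<beta>1[of v] x(1) have "region_of C (the (\<beta> v)) = R"
      by (cases "\<beta> v") auto
    with R show "\<beta>t v = Some (region_of C (the (\<beta> v)))"
      by simp
  qed
  then show thesis
    by (rule that[OF fires fire_reg_tilde[OF fires]])
qed

lemma fires_enabled_reg:
  assumes "fires D (M, \<alpha>) t \<beta> (M', \<alpha>')"
  obtains \<beta>t where "(t, \<beta>t) \<in> enabled_reg D C (M, tilde D C \<alpha>)"
    and "fire_reg D (M, tilde D C \<alpha>) t \<beta>t = (M', tilde D C \<alpha>')"
proof -
  have enabled: "enabled D M \<alpha> t \<beta>"
    using assms by (simp add: fires_def)
  then have accessed: "Var_r D t \<union> Var_w D t \<subseteq> dom \<beta>" "dom \<beta> \<subseteq> vars D"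
    unfolding enabled_def by auto
  define \<beta>t where
    "\<beta>t = (\<lambda>v. if v \<in> Var_r D t \<union> Var_w D t then Some (region_of C (the (\<beta> v))) else None)"
  have dom_\<beta>t: "dom \<beta>t = Var_r D t \<union> Var_w D t"
    by (auto simp: \<beta>t_def split: if_splits)
  have \<beta>t_regions: "the (\<beta>t v) \<in> partition_C C \<and> (\<exists>x. \<beta> v = Some x \<and> x \<in> reg_set (the (\<beta>t v)))"
    if "v \<in> dom \<beta>t" for v
  proof -
    have "v \<in> vars D" "v \<in> dom \<beta>"
      using that dom_\<beta>t accessed by auto
    then show ?thesis
      using that dom_\<beta>t region_of_var[OF \<open>v \<in> vars D\<close>] by (auto simp: \<beta>t_def)
  qed
  have "(t, \<beta>t) \<in> enabled_reg D C (M, tilde D C \<alpha>)"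
    unfolding enabled_reg_def mem_Collect_eq case_prod_conv fst_conv snd_conv
  proof (intro conjI exI)
    show "t \<in> trans D"
      using enabled by (simp add: enabled_def)
    show "\<forall>v \<in> vars D. \<alpha> v \<in> reg_set (the (tilde D C \<alpha> v))"
      using region_of_var by (simp add: tilde_def)
    show "enabled D M \<alpha> t \<beta>"
      by (fact enabled)
  qed (use dom_\<beta>t \<beta>t_regions in blast)+
  moreover have "fire_reg D (M, tilde D C \<alpha>) t \<beta>t = (M', tilde D C \<alpha>')"
    using fire_reg_tilde[OF assms] by (simp add: \<beta>t_def)
  ultimately show thesis
    by (rule that)
qed

end

locale gfa_exploration = interval_abstraction D C
  for D :: "('p, 't, 'n, 'a::linorder) dpn" and C +
  fixes M0 :: "'p \<Rightarrow> nat" and \<alpha>0 :: "'a \<Rightarrow> real"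
  assumes initial_consts: "\<forall>v \<in> vars D. \<alpha>0 v \<in> C"
    and safe: "safe D (M0, \<alpha>0)"
    and finite_places: "finite (places D)"
    and finite_vars: "finite (vars D)"
    and initial_outside_places: "\<forall>p. p \<notin> places D \<longrightarrow> M0 p = 0"
    and flow_outside_places: "\<forall>p t. p \<notin> places D \<longrightarrow> flow_in D p t = 0 \<and> flow_out D t p = 0"
begin

definition reachable_classes :: "('p, 'a) astate set" where
  "reachable_classes = {(M, tilde D C \<alpha>) | M \<alpha>. (M, \<alpha>) \<in> reachable D (M0, \<alpha>0)}"

definition induced_edges :: "(('p, 'a) astate \<times> ('n, 'a) cond \<times> ('p, 'a) astate) set" where
  "induced_edges = {(q, lbl, q') | q lbl q'. q \<in> reachable_classes \<and> q' \<in> reachable_classes \<and>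
     (\<exists>t \<beta> M \<alpha> M' \<alpha>'. fires D (M, \<alpha>) t \<beta> (M', \<alpha>')
        \<and> q = (M, tilde D C \<alpha>) \<and> q' = (M', tilde D C \<alpha>')
        \<and> lbl = label_and (lab D t) (guard_of D t (tilde D C \<alpha>')))}"

lemma induced_gfa_eq:
  "induced_gfa D C M0 \<alpha>0 Mf
     = (reachable_classes, (M0, tilde D C \<alpha>0), induced_edges, {q \<in> reachable_classes. fst q = Mf})"
  by (simp add: induced_gfa_def reachable_classes_def induced_edges_def Let_def)

lemma reachable_classesI: "(M, \<alpha>) \<in> reachable D (M0, \<alpha>0) \<Longrightarrow> (M, tilde D C \<alpha>) \<in> reachable_classes"
  unfolding reachable_classes_def by blast

lemma induced_edgesI:
  assumes "(M, \<alpha>) \<in> reachable D (M0, \<alpha>0)" "fires D (M, \<alpha>) t \<beta> (M', \<alpha>')"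
  shows "((M, tilde D C \<alpha>), label_and (lab D t) (guard_of D t (tilde D C \<alpha>')), (M', tilde D C \<alpha>'))
    \<in> induced_edges"
  unfolding induced_edges_def
  using reachable_classesI[OF assms(1)] reachable_classesI[OF reachable_fires[OF assms]] assms(2)
  by blast

lemma alg_q0_eq: "alg_q0 D M0 \<alpha>0 = (M0, tilde D C \<alpha>0)"
proof -
  have "region_of C (\<alpha>0 v) = RPt (\<alpha>0 v)" if "v \<in> vars D" for v
  proof (rule region_of_eqI[OF finite_C])
    show "RPt (\<alpha>0 v) \<in> partition_C C"
      using that initial_consts by (auto simp: partition_C_def)
  qed simp
  then show ?thesis
    by (auto simp: alg_q0_def tilde_def fun_eq_iff)
qed

lemma finite_reachable_classes: "finite reachable_classes"
proof -
  let ?markings = "{M. \<forall>p. (p \<in> places D \<longrightarrow> M p \<in> {0, 1}) \<and> (p \<notin> places D \<longrightarrow> M p = 0)}"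
  let ?region_maps =
    "{\<rho>. \<forall>v. (v \<in> vars D \<longrightarrow> \<rho> v \<in> Some ` partition_C C) \<and> (v \<notin> vars D \<longrightarrow> \<rho> v = None)}"
  have "reachable_classes \<subseteq> ?markings \<times> ?region_maps"
  proof
    fix q assume "q \<in> reachable_classes"
    then obtain M \<alpha> where q: "q = (M, tilde D C \<alpha>)" and reach: "(M, \<alpha>) \<in> reachable D (M0, \<alpha>0)"
      unfolding reachable_classes_def by blast
    have "M p \<le> 1" if "p \<in> places D" for p
      using safe reach that unfolding safe_def by force
    moreover have "M p = 0" if "p \<notin> places D" for p
      using reachable_marking_outside_places[OF reach] flow_outside_places initial_outside_places that
      by simp
    ultimately have "M \<in> ?markings"
      by (auto simp: le_Suc_eq)
    moreover have "tilde D C \<alpha> \<in> ?region_maps"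
      using region_of_var by (simp add: tilde_def)
    ultimately show "q \<in> ?markings \<times> ?region_maps"
      using q by simp
  qed
  moreover have "finite (?markings \<times> ?region_maps)"
    using finite_set_of_finite_funs[OF finite_places, of "{0, 1}" 0]
      finite_set_of_finite_funs[OF finite_vars, of "Some ` partition_C C" None]
      finite_partition_C[OF finite_C]
    by (intro finite_cartesian_product) simp_all
  ultimately show ?thesis
    by (rule finite_subset)
qed

lemma alg_edges_eq:
  assumes "s \<in> reachable_classes"
  shows "alg_edges D C s = {e \<in> induced_edges. fst e = s}"
proof (intro equalityI subsetI)
  fix e assume "e \<in> alg_edges D C s"
  then obtain t \<beta>t where e: "e = (s, alg_label D t (snd (fire_reg D s t \<beta>t)), fire_reg D s t \<beta>t)"
    and enabled: "(t, \<beta>t) \<in> enabled_reg D C s"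
    unfolding alg_edges_def by blast
  from assms obtain M \<alpha> where s: "s = (M, tilde D C \<alpha>)" and reach: "(M, \<alpha>) \<in> reachable D (M0, \<alpha>0)"
    unfolding reachable_classes_def by blast
  obtain \<beta> M' \<alpha>' where fires: "fires D (M, \<alpha>) t \<beta> (M', \<alpha>')"
    and "fire_reg D s t \<beta>t = (M', tilde D C \<alpha>')"
    using enabled_reg_fires enabled unfolding s by blast
  then have "e = ((M, tilde D C \<alpha>), label_and (lab D t) (guard_of D t (tilde D C \<alpha>')), (M', tilde D C \<alpha>'))"
    using e s by (simp add: alg_label_eq_label_and)
  then show "e \<in> {e \<in> induced_edges. fst e = s}"
    using induced_edgesI[OF reach fires] s by simp
next
  fix e assume "e \<in> {e \<in> induced_edges. fst e = s}"
  then obtain t \<beta> M \<alpha> M' \<alpha>' where fires: "fires D (M, \<alpha>) t \<beta> (M', \<alpha>')"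
    and s: "s = (M, tilde D C \<alpha>)"
    and e: "e = (s, label_and (lab D t) (guard_of D t (tilde D C \<alpha>')), (M', tilde D C \<alpha>'))"
    unfolding induced_edges_def by auto
  obtain \<beta>t where "(t, \<beta>t) \<in> enabled_reg D C s" and "fire_reg D s t \<beta>t = (M', tilde D C \<alpha>')"
    using fires_enabled_reg[OF fires] unfolding s by blast
  then show "e \<in> alg_edges D C s"
    unfolding alg_edges_def e by (force simp: alg_label_eq_label_and)
qed

lemma alg_succs_subset:
  assumes "s \<in> reachable_classes"
  shows "alg_succs D C s \<subseteq> reachable_classes"
  using alg_edges_eq[OF assms] unfolding alg_succs_eq_targets induced_edges_def by auto

lemma reachable_classes_subset:
  assumes "(M0, tilde D C \<alpha>0) \<in> Q"
    and closed: "\<forall>e \<in> induced_edges. fst e \<in> Q \<longrightarrow> snd (snd e) \<in> Q"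
  shows "reachable_classes \<subseteq> Q"
proof -
  have "(fst s, tilde D C (snd s)) \<in> Q" if "s \<in> reachable D (M0, \<alpha>0)" for s
  proof -
    have "(\<lambda>x y. \<exists>t \<beta>. fires D x t \<beta> y)\<^sup>*\<^sup>* (M0, \<alpha>0) s"
      using that by (simp add: reachable_def)
    then show ?thesis
    proof (induction rule: rtranclp_induct)
      case (step s s')
      then obtain t \<beta> where "fires D (fst s, snd s) t \<beta> (fst s', snd s')"
        by auto
      moreover have "(fst s, snd s) \<in> reachable D (M0, \<alpha>0)"
        using step.hyps(1) by (simp add: reachable_def)
      ultimately show ?case
        using induced_edgesI closed step.IH by fastforce
    qed (use assms(1) in simp)
  qed
  then show ?thesis
    unfolding reachable_classes_def by force
qed

definition exploration_invariant :: "('p, 'n, 'a) config \<Rightarrow> bool" where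
  "exploration_invariant c \<longleftrightarrow> (case c of (Q, W, R) \<Rightarrow>
     alg_q0 D M0 \<alpha>0 \<in> Q \<and> W \<subseteq> Q \<and> Q \<subseteq> reachable_classes
     \<and> R = {e \<in> induced_edges. fst e \<in> Q - W} \<and> (\<forall>e \<in> R. snd (snd e) \<in> Q))"

definition unexplored :: "('p, 'n, 'a) config \<Rightarrow> nat" where
  "unexplored c = (case c of (Q, W, R) \<Rightarrow> card (reachable_classes - (Q - W)))"

lemma exploration_invariant_init: "exploration_invariant (alg_init D M0 \<alpha>0)"
  using reachable_classesI[OF reachable_init]
  by (simp add: exploration_invariant_def alg_init_def alg_q0_eq)

lemma exploration_step:
  assumes "exploration_invariant c" "alg_step D C c c'"
  shows "exploration_invariant c' \<and> unexplored c' < unexplored c"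
proof -
  let ?S = "alg_succs D C"
  obtain Q W R where c: "c = (Q, W, R)"
    by (cases c) auto
  obtain s where "s \<in> W" and c': "c' = (Q \<union> ?S s, W - {s} \<union> (?S s - Q), R \<union> alg_edges D C s)"
    using assms(2) by (auto simp: c alg_step_iff)
  have inv: "alg_q0 D M0 \<alpha>0 \<in> Q" "W \<subseteq> Q" "Q \<subseteq> reachable_classes"
    "R = {e \<in> induced_edges. fst e \<in> Q - W}" "\<forall>e \<in> R. snd (snd e) \<in> Q"
    using assms(1) by (simp_all add: c exploration_invariant_def)
  with \<open>s \<in> W\<close> have s: "s \<in> reachable_classes - (Q - W)"
    by auto
  then have sU: "s \<in> reachable_classes"
    by blast
  have explored: "(Q \<union> ?S s) - (W - {s} \<union> (?S s - Q)) = insert s (Q - W)"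
    using \<open>s \<in> W\<close> inv(2) by auto
  have "exploration_invariant c'"
    unfolding c' exploration_invariant_def prod.case explored
  proof (intro conjI)
    show "alg_q0 D M0 \<alpha>0 \<in> Q \<union> ?S s" "W - {s} \<union> (?S s - Q) \<subseteq> Q \<union> ?S s"
      using inv(1,2) by auto
    show "Q \<union> ?S s \<subseteq> reachable_classes"
      using inv(3) alg_succs_subset[OF sU] by blast
    show "R \<union> alg_edges D C s = {e \<in> induced_edges. fst e \<in> insert s (Q - W)}"
      using inv(4) alg_edges_eq[OF sU] by auto
    show "\<forall>e \<in> R \<union> alg_edges D C s. snd (snd e) \<in> Q \<union> ?S s"
      using inv(5) unfolding alg_succs_eq_targets by blast
  qed
  moreover have "unexplored c' < unexplored c"
  proof -
    have "reachable_classes - insert s (Q - W) = reachable_classes - (Q - W) - {s}"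
      by blast
    then show ?thesis
      unfolding c c' unexplored_def prod.case explored
      using card_Diff1_less[OF finite_Diff[OF finite_reachable_classes] s] by simp
  qed
  ultimately show ?thesis ..
qed

lemma exploration_invariant_rtranclp:
  "(alg_step D C)\<^sup>*\<^sup>* (alg_init D M0 \<alpha>0) c \<Longrightarrow> exploration_invariant c"
  by (induction rule: rtranclp_induct) (use exploration_invariant_init exploration_step in blast)+

lemma alg_no_infinite_run:
  "\<not> (\<exists>f. f 0 = alg_init D M0 \<alpha>0 \<and> (\<forall>i. alg_step D C (f i) (f (Suc i))))"
proof
  assume "\<exists>f. f 0 = alg_init D M0 \<alpha>0 \<and> (\<forall>i. alg_step D C (f i) (f (Suc i)))"
  then obtain f where f0: "f 0 = alg_init D M0 \<alpha>0" and run: "\<And>i. alg_step D C (f i) (f (Suc i))"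
    by blast
  have "exploration_invariant (f i) \<and> unexplored (f i) + i \<le> unexplored (f 0)" for i
  proof (induction i)
    case (Suc i)
    then show ?case
      using exploration_step[OF _ run[of i]] by fastforce
  qed (simp add: f0 exploration_invariant_init)
  from this[of "Suc (unexplored (f 0))"] show False
    by simp
qed

lemma alg_terminal_reachable:
  "exploration_invariant c \<Longrightarrow> \<exists>c'. (alg_step D C)\<^sup>*\<^sup>* c c' \<and> fst (snd c') = {}"
proof (induction "unexplored c" arbitrary: c rule: less_induct)
  case less
  obtain Q W R where c: "c = (Q, W, R)"
    by (cases c) auto
  show ?case
  proof (cases "W = {}")
    case False
    then obtain s where "s \<in> W"
      by blast
    define c' where "c' = (Q \<union> alg_succs D C s, W - {s} \<union> (alg_succs D C s - Q), R \<union> alg_edges D C s)"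
    have step: "alg_step D C c c'"
      unfolding c alg_step_iff c'_def using \<open>s \<in> W\<close> by blast
    then have "exploration_invariant c'" "unexplored c' < unexplored c"
      using exploration_step less.prems by blast+
    then show ?thesis
      using less.hyps step by (meson converse_rtranclp_into_rtranclp)
  qed (auto simp: c)
qed

lemma alg_output_terminal:
  assumes "exploration_invariant c" "fst (snd c) = {}"
  shows "alg_output D M0 \<alpha>0 Mf c = induced_gfa D C M0 \<alpha>0 Mf"
proof -
  obtain Q R where c: "c = (Q, {}, R)"
    using assms(2) by (cases c) auto
  have inv: "alg_q0 D M0 \<alpha>0 \<in> Q" "Q \<subseteq> reachable_classes"
    "R = {e \<in> induced_edges. fst e \<in> Q}" "\<forall>e \<in> R. snd (snd e) \<in> Q"
    using assms(1) by (simp_all add: c exploration_invariant_def)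
  then have "reachable_classes \<subseteq> Q"
    by (intro reachable_classes_subset) (auto simp: alg_q0_eq)
  moreover have "fst e \<in> reachable_classes" if "e \<in> induced_edges" for e
    using that unfolding induced_edges_def by auto
  ultimately have "Q = reachable_classes" "R = induced_edges"
    using inv by auto
  then show ?thesis
    by (simp add: c alg_output_def induced_gfa_eq alg_q0_eq)
qed

end

theorem theorem1:
  fixes E :: "('n \<times> 'a::linorder set) set"
    and D :: "('p, 't, 'n, 'a) dpn"
    and M0 Mf :: "'p \<Rightarrow> nat"
    and \<alpha>0 :: "'a \<Rightarrow> real"
    and C :: "real set"
  assumes "event_sigs E"
    and "is_dpnif E D M0 \<alpha>0 Mf"
    and "safe D (M0, \<alpha>0)"
    and "well_formed E D"
    and "finite C"
    and "\<forall>t \<in> trans D. gconsts (rguard D t) \<union> gconsts (wguard D t) \<subseteq> C"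
    and "\<forall>v \<in> vars D. \<alpha>0 v \<in> C"
  shows "\<not> (\<exists>f. f 0 = alg_init D M0 \<alpha>0 \<and> (\<forall>i. alg_step D C (f i) (f (Suc i))))
    \<and> (\<exists>c. (alg_step D C)\<^sup>*\<^sup>* (alg_init D M0 \<alpha>0) c \<and> fst (snd c) = {})
    \<and> (\<forall>c. (alg_step D C)\<^sup>*\<^sup>* (alg_init D M0 \<alpha>0) c \<and> fst (snd c) = {}
           \<longrightarrow> alg_output D M0 \<alpha>0 Mf c = induced_gfa D C M0 \<alpha>0 Mf)"
proof -
  have "is_dpn E D" and "\<forall>p. p \<notin> places D \<longrightarrow> M0 p = 0"
    using assms(2) unfolding is_dpnif_def by auto
  moreover have "finite (vars D)"
    using \<open>is_dpn E D\<close> assms(1) finite_subset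
    unfolding is_dpn_def event_sigs_def sig_attrs_def by fastforce
  ultimately interpret gfa_exploration D C M0 \<alpha>0
    using assms(3,5-7) by unfold_locales (auto simp: is_dpn_def)
  show ?thesis
    using alg_no_infinite_run alg_terminal_reachable[OF exploration_invariant_init]
      alg_output_terminal exploration_invariant_rtranclp
    by blast
qed

end
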